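(* Let $n\ge 2$ be an integer, let $a_1,\dots,a_n>0$ with $\sum_{k=1}^n a_k=1$, and let $c_k,d_k,\beta_k\in\mathbb{R}$ ($k=1,\dots,n$) with $\max_{1\le k\le n}|d_k|<1$. Put $\alpha_1=0$, $\alpha_k=\sum_{j=1}^{k-1}a_j$ for $k=2,\dots,n+1$, and $S_k(x)=a_kx+\alpha_k$. Let $f\in C[0;1]$ be a continuous function satisfying $f=G(f)$, where $$[G(f)](t)=\sum_{k=1}^n\bigl(d_k f(S_k^{-1}(t))+c_k t+\beta_k\bigr)\chi_{I_k}(t),\qquad I_1=[0;\alpha_2],\ I_k=(\alpha_k;\alpha_{k+1}]\ (k\ge2).$$ Suppose there is an index $i$ with $|d_i|>a_i$. Then for every $\alpha\in(0;1]$ satisfying $$\alpha\le\min_{1\le j\le n}\frac{\ln|d_j|}{\ln a_j}$$ there exists a constant $C\ge0$ such that $|f(x)-f(y)|\le C|x-y|^{\alpha}$ for all $x,y\in[0;1]$ (i.e. $f$ satisfies the Hölder condition with exponent $\alpha$).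
   Context: Here $\chi_I$ is the indicator function of the interval $I$. A continuous function $f$ with $G(f)=f$ is called an (affine) self-similar function with self-similarity parameters $\{a_k\},\{c_k\},\{d_k\},\{\beta_k\}$. Convention: if $d_j=0$, then $\ln|d_j|=-\infty$ and the ratio $\ln|d_j|/\ln a_j$ is interpreted as $+\infty$. A function $f$ on $[0;1]$ satisfies the Hölder condition with exponent $\alpha\in(0;1]$ if $\sup_{x\ne y}|f(x)-f(y)|/|x-y|^\alpha<\infty$. *)

theory Defs
  imports "HOL-Analysis.Analysis"
begin

definition ss_alpha :: "(nat \<Rightarrow> real) \<Rightarrow> nat \<Rightarrow> real" where
  "ss_alpha a k = (\<Sum>j=1..<k. a j)"

definition ss_I :: "(nat \<Rightarrow> real) \<Rightarrow> nat \<Rightarrow> real set" where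
  "ss_I a k = (if k = 1 then {0 .. ss_alpha a 2} else {ss_alpha a k <.. ss_alpha a (Suc k)})"

definition ss_S :: "(nat \<Rightarrow> real) \<Rightarrow> nat \<Rightarrow> real \<Rightarrow> real" where
  "ss_S a k x = a k * x + ss_alpha a k"

definition ss_S_inv :: "(nat \<Rightarrow> real) \<Rightarrow> nat \<Rightarrow> real \<Rightarrow> real" where
  "ss_S_inv a k t = (t - ss_alpha a k) / a k"

definition ss_G :: "nat \<Rightarrow> (nat \<Rightarrow> real) \<Rightarrow> (nat \<Rightarrow> real) \<Rightarrow> (nat \<Rightarrow> real) \<Rightarrow> (nat \<Rightarrow> real)
                    \<Rightarrow> (real \<Rightarrow> real) \<Rightarrow> real \<Rightarrow> real" where
  "ss_G n a c d \<beta> f t =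
     (\<Sum>k=1..n. (d k * f (ss_S_inv a k t) + c k * t + \<beta> k) * indicator (ss_I a k) t)"

end

theory Submission
  imports Defs
begin

text \<open>The exponent condition gives \<open>\<bar>d\<^sub>k\<bar> \<le> a\<^sub>k\<^sup>\<alpha>\<close> for every \<open>k\<close>, and \<open>\<bar>d\<^sub>i\<bar> > a\<^sub>i\<close>
  forces \<open>\<alpha> < 1\<close>. Consider the modulus \<open>\<phi>\<^sub>C(h) = C h\<^sup>\<alpha> - E h\<close>, where \<open>E\<close> is chosen
  with \<open>E (a\<^sub>k\<^sup>\<alpha>\<^sup>-\<^sup>1 - 1) \<ge> \<bar>c\<^sub>k\<bar>\<close>. By the fixed point equation
  \<open>f(S\<^sub>k v) - f(S\<^sub>k u) = d\<^sub>k (f v - f u) + c\<^sub>k a\<^sub>k (v - u)\<close>, an estimate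
  \<open>\<bar>f x - f y\<bar> \<le> \<phi>\<^sub>C(\<bar>x - y\<bar>) + e\<close> on \<open>[0, 1]\<close> transfers to pairs inside one piece
  \<open>[\<alpha>\<^sub>k, \<alpha>\<^sub>k\<^sub>+\<^sub>1]\<close> with error \<open>max\<^sub>k \<bar>d\<^sub>k\<bar> e\<close>, while pairs at distance at least
  \<open>min\<^sub>k a\<^sub>k\<close> are controlled by the oscillation of \<open>f\<close> once \<open>C\<close> is large. Iterating
  from the trivial error \<open>e = osc f\<close> drives the error to \<open>0\<close>. This first works for pairs
  containing an endpoint of \<open>[0, 1]\<close>, because such a pair stays in the first or the last
  piece; a close pair straddling a partition point \<open>\<alpha>\<^sub>k\<^sub>+\<^sub>1\<close> is then split there into
  two endpoint pairs of rescaled copies, which gives the estimate for all pairs with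
  constant \<open>2C + E\<close>.\<close>

lemma ss_alpha_1 [simp]: "ss_alpha a 1 = 0" "ss_alpha a (Suc 0) = 0"
  by (simp_all add: ss_alpha_def atLeastLessThan_empty)

lemma ss_alpha_Suc: "1 \<le> k \<Longrightarrow> ss_alpha a (Suc k) = ss_alpha a k + a k"
  by (simp add: ss_alpha_def sum.atLeastLessThan_Suc)

lemma ss_S_ss_S_inv: "a k \<noteq> 0 \<Longrightarrow> ss_S a k (ss_S_inv a k x) = x"
  by (simp add: ss_S_def ss_S_inv_def)

lemma ss_S_inv_ss_S: "a k \<noteq> 0 \<Longrightarrow> ss_S_inv a k (ss_S a k t) = t"
  by (simp add: ss_S_def ss_S_inv_def)

lemma contracting_error_vanishes:
  fixes X Y :: "'a \<Rightarrow> real"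
  assumes D: "0 \<le> D" "D < 1" and B: "0 \<le> B" "\<And>s. s \<in> T \<Longrightarrow> X s \<le> Y s + B"
    and step: "\<And>e t. 0 \<le> e \<Longrightarrow> (\<And>s. s \<in> T \<Longrightarrow> X s \<le> Y s + e) \<Longrightarrow> t \<in> T \<Longrightarrow> X t \<le> Y t + D * e"
    and t: "t \<in> T"
  shows "X t \<le> Y t"
proof -
  have "X s \<le> Y s + B * D ^ N" if "s \<in> T" for s N
    using that
  proof (induction N arbitrary: s)
    case 0
    then show ?case using B by simp
  next
    case (Suc N)
    then have "X s \<le> Y s + D * (B * D ^ N)" using step[of "B * D ^ N" s] B D by simp
    then show ?case by (simp add: algebra_simps)
  qed
  moreover have "(\<lambda>N. Y t + B * D ^ N) \<longlonglongrightarrow> Y t + B * 0"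
    using D by (intro tendsto_intros LIMSEQ_power_zero) auto
  ultimately show ?thesis using t by (intro LIMSEQ_le_const) auto
qed

lemma finite_ex_uniform_bound_less:
  fixes g :: "'a \<Rightarrow> real"
  assumes "finite K" "\<forall>k\<in>K. g k < b"
  shows "\<exists>D<b. \<forall>k\<in>K. g k \<le> D"
proof (cases "K = {}")
  case False
  then show ?thesis using assms by (intro exI[of _ "Max (g ` K)"]) auto
qed (auto intro: exI[of _ "b - 1"])

lemma finite_ex_uniform_bound_greater:
  fixes g :: "'a \<Rightarrow> real"
  assumes "finite K" "\<forall>k\<in>K. b < g k"
  shows "\<exists>m>b. \<forall>k\<in>K. m \<le> g k"
proof -
  obtain D where "D < - b" "\<forall>k\<in>K. - g k \<le> D"
    using finite_ex_uniform_bound_less[of K "\<lambda>k. - g k" "- b"] assms by auto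
  then show ?thesis by (intro exI[of _ "- D"]) auto
qed

lemma continuous_on_compact_ex_oscillation_bound:
  fixes f :: "'a::topological_space \<Rightarrow> real"
  assumes "continuous_on S f" "compact S"
  shows "\<exists>B. \<forall>x\<in>S. \<forall>y\<in>S. \<bar>f x - f y\<bar> \<le> B"
proof -
  obtain M where M: "\<forall>z\<in>f ` S. \<bar>z\<bar> \<le> M"
    using compact_imp_bounded[OF compact_continuous_image[OF assms]] by (auto simp: bounded_real)
  then have "\<bar>f x - f y\<bar> \<le> 2 * M" if "x \<in> S" "y \<in> S" for x y
  proof -
    have "\<bar>f x\<bar> \<le> M" "\<bar>f y\<bar> \<le> M" using M that by auto
    then show ?thesis by linarith
  qed
  then show ?thesis by blast
qed

lemma le_powr_of_le_ln_div_ln: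
  fixes A \<delta> \<alpha> :: real
  assumes "0 < A" "A < 1" "0 < \<delta>" "\<alpha> \<le> ln \<delta> / ln A"
  shows "\<delta> \<le> A powr \<alpha>"
proof -
  have "ln \<delta> \<le> \<alpha> * ln A" using assms by (simp add: le_divide_eq)
  then show ?thesis using assms by (simp add: powr_def ln_le_cancel_iff[symmetric])
qed

locale ss_partition =
  fixes n :: nat and a :: "nat \<Rightarrow> real"
  assumes n_ge_2: "n \<ge> 2"
    and a_pos: "\<And>k. 1 \<le> k \<Longrightarrow> k \<le> n \<Longrightarrow> 0 < a k"
    and a_sum: "(\<Sum>k=1..n. a k) = 1"
begin

lemma ss_alpha_last: "ss_alpha a (Suc n) = 1"
  using a_sum by (simp add: ss_alpha_def atLeastLessThanSuc_atLeastAtMost)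

lemma ss_alpha_mono: assumes "j \<le> k" "k \<le> Suc n" shows "ss_alpha a j \<le> ss_alpha a k"
  unfolding ss_alpha_def using assms by (intro sum_mono2) (auto intro!: less_imp_le[OF a_pos])

lemma ss_alpha_nonneg: "k \<le> Suc n \<Longrightarrow> 0 \<le> ss_alpha a k"
  using ss_alpha_mono[of 0 k] by (simp add: ss_alpha_def)

lemma ss_alpha_le_1: "k \<le> Suc n \<Longrightarrow> ss_alpha a k \<le> 1"
  using ss_alpha_mono[of k "Suc n"] ss_alpha_last by simp

lemma a_lt_1: assumes "1 \<le> k" "k \<le> n" shows "a k < 1"
proof -
  obtain j where j: "j \<in> {1..n}" "j \<noteq> k"
  proof (cases "k = 1")
    case True then show ?thesis using that[of 2] n_ge_2 by auto
  next
    case False then show ?thesis using that[of 1] n_ge_2 by auto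
  qed
  have "a j \<le> (\<Sum>i\<in>{1..n}-{k}. a i)"
    using j by (intro member_le_sum) (auto intro!: less_imp_le[OF a_pos])
  moreover have "(\<Sum>i=1..n. a i) = a k + (\<Sum>i\<in>{1..n}-{k}. a i)"
    using assms by (simp add: sum.remove)
  ultimately show ?thesis using a_pos[of j] j a_sum by simp
qed

lemma abs_le_a_powr:
  assumes "1 \<le> k" "k \<le> n" and "d k \<noteq> 0 \<longrightarrow> \<alpha> \<le> ln \<bar>d k\<bar> / ln (a k)"
  shows "\<bar>d k\<bar> \<le> a k powr \<alpha>"
  using assms a_pos a_lt_1 le_powr_of_le_ln_div_ln[of "a k" "\<bar>d k\<bar>" \<alpha>] by (cases "d k = 0") auto

lemma ss_S_mem_piece:
  assumes "1 \<le> k" "k \<le> n" "t \<in> {0..1}"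
  shows "ss_S a k t \<in> {ss_alpha a k .. ss_alpha a (Suc k)}"
  using assms a_pos[OF assms(1,2)] mult_left_le[of t "a k"]
  by (simp add: ss_S_def ss_alpha_Suc)

lemma ss_S_mem_unit: assumes "1 \<le> k" "k \<le> n" "t \<in> {0..1}" shows "ss_S a k t \<in> {0..1}"
  using ss_S_mem_piece[OF assms] ss_alpha_nonneg[of k] ss_alpha_le_1[of "Suc k"] assms by auto

lemma ss_S_inv_mem_unit:
  assumes "1 \<le> k" "k \<le> n" "x \<in> {ss_alpha a k .. ss_alpha a (Suc k)}"
  shows "ss_S_inv a k x \<in> {0..1}"
  using assms a_pos[OF assms(1,2)] by (simp add: ss_S_inv_def ss_alpha_Suc field_simps)

lemma ss_S_mem_I:
  assumes "1 \<le> k" "k \<le> n" "t \<in> {0..1}" "0 < t \<or> k = 1"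
  shows "ss_S a k t \<in> ss_I a k"
  using ss_S_mem_piece[OF assms(1-3)] assms a_pos[OF assms(1,2)]
  by (auto simp: ss_I_def ss_S_def numeral_2_eq_2 ss_alpha_Suc)

lemma ss_I_disjoint:
  assumes "j < k" "k \<le> n" "1 \<le> j" "t \<in> ss_I a k"
  shows "t \<notin> ss_I a j"
  using assms ss_alpha_mono[of "Suc j" k]
  by (auto simp: ss_I_def numeral_2_eq_2 split: if_splits)

lemma ex_piece:
  assumes "x \<in> {0..1}"
  obtains k where "1 \<le> k" "k \<le> n" "x \<in> {ss_alpha a k .. ss_alpha a (Suc k)}"
proof -
  define K where "K = {k\<in>{1..n}. ss_alpha a k \<le> x}"
  define k where "k = Max K"
  have "1 \<in> K" using n_ge_2 assms by (auto simp: K_def)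
  then have "k \<in> K" unfolding k_def by (intro Max_in) (auto simp: K_def)
  then have k: "1 \<le> k" "k \<le> n" "ss_alpha a k \<le> x" by (auto simp: K_def)
  have "x \<le> ss_alpha a (Suc k)"
  proof (cases "k = n")
    case True then show ?thesis using ss_alpha_last assms by simp
  next
    case False
    have "Suc k \<notin> K"
    proof
      assume "Suc k \<in> K"
      then have "Suc k \<le> k" unfolding k_def by (intro Max_ge) (auto simp: K_def)
      then show False by simp
    qed
    then show ?thesis using k False by (auto simp: K_def)
  qed
  with k show ?thesis using that by simp
qed

end

locale ss_fixed_point = ss_partition n a
  for n :: nat and a :: "nat \<Rightarrow> real" +
  fixes c d \<beta> :: "nat \<Rightarrow> real" and f :: "real \<Rightarrow> real"
  assumes f_cont: "continuous_on {0..1} f"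
    and f_fixed: "\<forall>t\<in>{0..1}. f t = ss_G n a c d \<beta> f t"
begin

lemma ss_G_on_I:
  assumes "1 \<le> k" "k \<le> n" "t \<in> ss_I a k"
  shows "ss_G n a c d \<beta> f t = d k * f (ss_S_inv a k t) + c k * t + \<beta> k"
proof -
  have "t \<notin> ss_I a j" if "j \<in> {1..n} - {k}" for j
    using that assms ss_I_disjoint[of j k t] ss_I_disjoint[of k j t] by (cases "j < k") auto
  then have "ss_G n a c d \<beta> f t
      = (\<Sum>j\<in>{k}. (d j * f (ss_S_inv a j t) + c j * t + \<beta> j) * indicator (ss_I a j) t)"
    unfolding ss_G_def using assms by (intro sum.mono_neutral_right) auto
  then show ?thesis using assms(3) by simp
qed

lemma fixed_point_equation_open:
  assumes "1 \<le> k" "k \<le> n" "t \<in> {0..1}" "0 < t \<or> k = 1"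
  shows "f (ss_S a k t) = d k * f t + c k * ss_S a k t + \<beta> k"
  using f_fixed ss_S_mem_unit[OF assms(1-3)] ss_G_on_I[OF assms(1,2) ss_S_mem_I[OF assms]]
    ss_S_inv_ss_S a_pos[OF assms(1,2)] by simp

text \<open>At \<open>t = 0\<close> and \<open>k \<ge> 2\<close> the point \<open>S\<^sub>k 0\<close> lies in \<open>I\<^sub>k\<^sub>-\<^sub>1\<close>; the equation
  still holds there by continuity.\<close>
lemma fixed_point_equation:
  assumes "1 \<le> k" "k \<le> n" "t \<in> {0..1}"
  shows "f (ss_S a k t) = d k * f t + c k * ss_S a k t + \<beta> k"
proof (cases "0 < t \<or> k = 1")
  case True then show ?thesis using fixed_point_equation_open assms by blast
next
  case False
  then have t0: "t = 0" using assms by simp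
  define g where "g t = f (ss_S a k t) - (d k * f t + c k * ss_S a k t + \<beta> k)" for t
  have S_cont: "continuous_on {0..1} (ss_S a k)"
    unfolding ss_S_def by (intro continuous_intros)
  then have "continuous_on {0..1} (\<lambda>t. f (ss_S a k t))"
    using ss_S_mem_unit[OF assms(1,2)] by (intro continuous_on_compose2[OF f_cont]) auto
  then have "continuous_on (closure {0<..1}) g"
    unfolding g_def using f_cont S_cont by (simp add: continuous_intros)
  moreover have "g t = 0" if "t \<in> {0<..1}" for t
    using fixed_point_equation_open[OF assms(1,2)] that by (simp add: g_def)
  moreover have "0 \<in> closure {0<..1::real}" by simp
  ultimately have "g 0 = 0" by (rule continuous_constant_on_closure)
  then show ?thesis using t0 by (simp add: g_def)
qed

lemma f_ss_S_diff:
  assumes "1 \<le> k" "k \<le> n" "u \<in> {0..1}" "v \<in> {0..1}"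
  shows "f (ss_S a k v) - f (ss_S a k u) = d k * (f v - f u) + c k * (ss_S a k v - ss_S a k u)"
  using fixed_point_equation[OF assms(1,2,3)] fixed_point_equation[OF assms(1,2,4)]
  by (simp add: algebra_simps)

end

locale ss_holder = ss_fixed_point +
  fixes \<alpha> B D m :: real
  assumes alpha_pos: "0 < \<alpha>" and alpha_lt_1: "\<alpha> < 1"
    and d_le_a_powr: "\<forall>k\<in>{1..n}. \<bar>d k\<bar> \<le> a k powr \<alpha>"
    and osc_le: "\<forall>x\<in>{0..1}. \<forall>y\<in>{0..1}. \<bar>f x - f y\<bar> \<le> B"
    and D_lt_1: "D < 1" and d_le_D: "\<forall>k\<in>{1..n}. \<bar>d k\<bar> \<le> D"
    and m_pos: "0 < m" and m_le_a: "\<forall>k\<in>{1..n}. m \<le> a k"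
begin

definition E :: real where "E = (\<Sum>k=1..n. \<bar>c k\<bar> / (a k powr (\<alpha> - 1) - 1))"

definition modulus :: "real \<Rightarrow> real \<Rightarrow> real" where "modulus C h = C * h powr \<alpha> - E * h"

definition min_const :: real where "min_const = E + (\<Sum>k=1..n. \<bar>c k\<bar>) + B / m powr \<alpha>"

lemma D_nonneg: "0 \<le> D"
  using d_le_D n_ge_2 by force

lemma B_nonneg: "0 \<le> B"
  using osc_le by force

lemma a_powr_gt_1: "1 \<le> k \<Longrightarrow> k \<le> n \<Longrightarrow> 1 < a k powr (\<alpha> - 1)"
  using powr_less_mono2_neg[of "\<alpha> - 1" "a k" 1] a_pos a_lt_1 alpha_lt_1 by simp

lemma E_nonneg: "0 \<le> E"
  unfolding E_def using a_powr_gt_1 by (intro sum_nonneg divide_nonneg_pos) auto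

lemma abs_c_le_E: assumes "1 \<le> k" "k \<le> n" shows "\<bar>c k\<bar> \<le> E * (a k powr (\<alpha> - 1) - 1)"
proof -
  have "\<bar>c k\<bar> / (a k powr (\<alpha> - 1) - 1) \<le> E"
    unfolding E_def using assms a_powr_gt_1 by (intro member_le_sum divide_nonneg_pos) auto
  then show ?thesis using a_powr_gt_1[OF assms] by (simp add: divide_le_eq mult.commute)
qed

lemma E_plus_abs_c_le_min_const: "1 \<le> k \<Longrightarrow> k \<le> n \<Longrightarrow> E + \<bar>c k\<bar> \<le> min_const"
proof -
  assume "1 \<le> k" "k \<le> n"
  then have "\<bar>c k\<bar> \<le> (\<Sum>k=1..n. \<bar>c k\<bar>)" by (intro member_le_sum) auto
  moreover have "0 \<le> B / m powr \<alpha>" using B_nonneg m_pos by simp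
  ultimately show ?thesis unfolding min_const_def by simp
qed

lemma E_le_min_const: "E \<le> min_const"
  using E_plus_abs_c_le_min_const[of 1] n_ge_2 by simp

lemma modulus_le: "0 \<le> h \<Longrightarrow> modulus C h \<le> C * h powr \<alpha>"
  unfolding modulus_def using E_nonneg by simp

lemma modulus_ge: assumes "E \<le> C" "0 \<le> h" "h \<le> 1" shows "(C - E) * h powr \<alpha> \<le> modulus C h"
proof -
  have "h \<le> h powr \<alpha>" using powr_mono'[of \<alpha> 1 h] alpha_lt_1 assms by simp
  then have "E * h \<le> E * h powr \<alpha>" using E_nonneg by (rule mult_left_mono)
  then show ?thesis unfolding modulus_def by (simp add: algebra_simps)
qed

lemma modulus_nonneg: "E \<le> C \<Longrightarrow> 0 \<le> h \<Longrightarrow> h \<le> 1 \<Longrightarrow> 0 \<le> modulus C h"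
  using modulus_ge[of C h] by (smt (verit) mult_nonneg_nonneg powr_ge_zero)

lemma modulus_ge_B: assumes "min_const \<le> C" "m \<le> h" "h \<le> 1" shows "B \<le> modulus C h"
proof -
  have "B \<le> (min_const - E) * m powr \<alpha>"
    unfolding min_const_def using m_pos by (simp add: algebra_simps sum_nonneg)
  also have "\<dots> \<le> (C - E) * h powr \<alpha>"
    using assms m_pos E_le_min_const alpha_pos by (intro mult_mono powr_mono2) auto
  also have "\<dots> \<le> modulus C h"
    using assms m_pos E_le_min_const by (intro modulus_ge) auto
  finally show ?thesis .
qed

text \<open>With \<open>\<theta> = \<bar>d\<^sub>k\<bar> / a\<^sub>k\<^sup>\<alpha> \<in> [0, 1]\<close> and \<open>P = a\<^sub>k\<^sup>\<alpha>\<^sup>-\<^sup>1\<close>, the defect equals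
  \<open>(1 - \<theta>) C (h\<^sup>\<alpha> - h) + h ((1 - \<theta>)(C - E - \<bar>c\<^sub>k\<bar>) + \<theta> (E (P - 1) - \<bar>c\<^sub>k\<bar>))\<close>,
  a sum of nonnegative terms.\<close>
lemma modulus_contracts:
  assumes k: "1 \<le> k" "k \<le> n" and C: "E + \<bar>c k\<bar> \<le> C" and h: "0 \<le> h" "h \<le> a k"
  shows "\<bar>d k\<bar> * modulus C (h / a k) + \<bar>c k\<bar> * h \<le> modulus C h"
proof -
  have ak: "0 < a k" "a k < 1" using a_pos a_lt_1 k by auto
  define A where "A = a k powr \<alpha>"
  define P where "P = a k powr (\<alpha> - 1)"
  define \<theta> where "\<theta> = \<bar>d k\<bar> / A"
  have A: "0 < A" "P = A / a k" using ak by (simp_all add: A_def P_def powr_diff)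
  have \<theta>: "0 \<le> \<theta>" "\<theta> \<le> 1" "\<bar>d k\<bar> = \<theta> * A"
    using A d_le_a_powr k by (simp_all add: \<theta>_def A_def)
  have "h \<le> h powr \<alpha>" using powr_mono'[of \<alpha> 1 h] alpha_lt_1 h ak by simp
  then have "0 \<le> (1 - \<theta>) * C * (h powr \<alpha> - h)"
    using \<theta> C E_nonneg by simp
  moreover have "0 \<le> h * ((1 - \<theta>) * (C - E - \<bar>c k\<bar>) + \<theta> * (E * (P - 1) - \<bar>c k\<bar>))"
    using h \<theta> C abs_c_le_E[OF k] by (simp add: P_def)
  moreover have "\<bar>d k\<bar> * modulus C (h / a k) = \<theta> * C * h powr \<alpha> - \<theta> * E * P * h"
    using h ak A \<theta>(3) by (simp add: modulus_def A_def powr_divide field_simps)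
  then have "modulus C h - (\<bar>d k\<bar> * modulus C (h / a k) + \<bar>c k\<bar> * h)
      = (1 - \<theta>) * C * (h powr \<alpha> - h) + h * ((1 - \<theta>) * (C - E - \<bar>c k\<bar>) + \<theta> * (E * (P - 1) - \<bar>c k\<bar>))"
    by (simp add: modulus_def algebra_simps)
  ultimately show ?thesis by linarith
qed

lemma modulus_scale_piece:
  assumes k: "1 \<le> k" "k \<le> n" and C: "E + \<bar>c k\<bar> \<le> C"
    and xy: "ss_alpha a k \<le> x" "x \<le> y" "y \<le> ss_alpha a (Suc k)" and e: "0 \<le> e"
    and hyp: "\<bar>f (ss_S_inv a k x) - f (ss_S_inv a k y)\<bar>
      \<le> modulus C (ss_S_inv a k y - ss_S_inv a k x) + e"
  shows "\<bar>f x - f y\<bar> \<le> modulus C (y - x) + D * e"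
proof -
  define u where "u = ss_S_inv a k x"
  define v where "v = ss_S_inv a k y"
  have ak: "0 < a k" using a_pos k by simp
  have uv: "u \<in> {0..1}" "v \<in> {0..1}" "v - u = (y - x) / a k"
    using ss_S_inv_mem_unit[OF k] xy by (auto simp: u_def v_def ss_S_inv_def diff_divide_distrib)
  have xy_S: "x = ss_S a k u" "y = ss_S a k v"
    using ak by (simp_all add: u_def v_def ss_S_ss_S_inv)
  have h: "0 \<le> y - x" "y - x \<le> a k"
    using xy ss_alpha_Suc[of k] k by simp_all
  have "f y - f x = d k * (f v - f u) + c k * (y - x)"
    using f_ss_S_diff[OF k uv(1,2)] xy_S by simp
  then have "\<bar>f x - f y\<bar> = \<bar>d k * (f v - f u) + c k * (y - x)\<bar>"
    by (simp add: abs_minus_commute)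
  also have "\<dots> \<le> \<bar>d k\<bar> * \<bar>f u - f v\<bar> + \<bar>c k\<bar> * (y - x)"
    using abs_triangle_ineq[of "d k * (f v - f u)" "c k * (y - x)"] h
    by (simp add: abs_mult abs_minus_commute)
  also have "\<dots> \<le> \<bar>d k\<bar> * (modulus C ((y - x) / a k) + e) + \<bar>c k\<bar> * (y - x)"
    using hyp uv by (simp add: u_def v_def mult_left_mono)
  also have "\<dots> = (\<bar>d k\<bar> * modulus C ((y - x) / a k) + \<bar>c k\<bar> * (y - x)) + \<bar>d k\<bar> * e"
    by (simp add: algebra_simps)
  also have "\<dots> \<le> modulus C (y - x) + D * e"
    using modulus_contracts[OF k C h] d_le_D k e by (intro add_mono mult_right_mono) auto
  finally show ?thesis .
qed

lemma osc_le_modulus_plus_B: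
  assumes "E \<le> C" "0 \<le> x" "x \<le> y" "y \<le> 1"
  shows "\<bar>f x - f y\<bar> \<le> modulus C (y - x) + B"
  using osc_le assms modulus_nonneg[of C "y - x"] by (smt (verit) atLeastAtMost_iff)

lemma osc_le_modulus_far:
  assumes "min_const \<le> C" "0 \<le> x" "m \<le> y - x" "y \<le> 1"
  shows "\<bar>f x - f y\<bar> \<le> modulus C (y - x)"
proof -
  have "\<bar>f x - f y\<bar> \<le> B" using osc_le assms m_pos by auto
  also have "B \<le> modulus C (y - x)" using modulus_ge_B assms by simp
  finally show ?thesis .
qed

lemma modulus_estimate_endpoint_step:
  assumes C: "min_const \<le> C" and e: "0 \<le> e"
    and hyp: "\<And>u v. 0 \<le> u \<Longrightarrow> u \<le> v \<Longrightarrow> v \<le> 1 \<Longrightarrow> u = 0 \<or> v = 1 \<Longrightarrow>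
      \<bar>f u - f v\<bar> \<le> modulus C (v - u) + e"
    and xy: "0 \<le> x" "x \<le> y" "y \<le> 1" "x = 0 \<or> y = 1"
  shows "\<bar>f x - f y\<bar> \<le> modulus C (y - x) + D * e"
proof (cases "m \<le> y - x")
  case True
  then show ?thesis
    using osc_le_modulus_far[OF C xy(1) True xy(3)] mult_nonneg_nonneg[OF D_nonneg e] by linarith
next
  case False
  have "m \<le> a 1" "m \<le> a n" "ss_alpha a n = 1 - a n"
    using m_le_a n_ge_2 ss_alpha_Suc[of n a] ss_alpha_last by auto
  then consider "x = 0" "y \<le> a 1" | "y = 1" "ss_alpha a n \<le> x"
    using xy False by fastforce
  then show ?thesis
  proof cases
    case 1
    have "ss_S_inv a 1 y \<le> 1" "0 \<le> ss_S_inv a 1 y"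
      using 1 xy a_pos[of 1] n_ge_2 by (simp_all add: ss_S_inv_def)
    then have "\<bar>f (ss_S_inv a 1 x) - f (ss_S_inv a 1 y)\<bar>
        \<le> modulus C (ss_S_inv a 1 y - ss_S_inv a 1 x) + e"
      using hyp[of 0 "ss_S_inv a 1 y"] 1 by (simp add: ss_S_inv_def)
    then show ?thesis
      using 1 xy n_ge_2 e C E_plus_abs_c_le_min_const[of 1]
      by (intro modulus_scale_piece[where k = 1]) (simp_all add: ss_alpha_Suc)
  next
    case 2
    have "ss_S_inv a n y = 1" "0 \<le> ss_S_inv a n x" "ss_S_inv a n x \<le> 1"
      using 2 xy \<open>ss_alpha a n = 1 - a n\<close> a_pos[of n] n_ge_2 by (simp_all add: ss_S_inv_def)
    then have "\<bar>f (ss_S_inv a n x) - f (ss_S_inv a n y)\<bar>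
        \<le> modulus C (ss_S_inv a n y - ss_S_inv a n x) + e"
      using hyp[of "ss_S_inv a n x" 1] by simp
    then show ?thesis
      using 2 xy n_ge_2 e C E_plus_abs_c_le_min_const[of n] ss_alpha_last
      by (intro modulus_scale_piece[where k = n]) simp_all
  qed
qed

lemma modulus_estimate_endpoint:
  assumes C: "min_const \<le> C" and xy: "0 \<le> x" "x \<le> y" "y \<le> 1" "x = 0 \<or> y = 1"
  shows "\<bar>f x - f y\<bar> \<le> modulus C (y - x)"
proof -
  let ?T = "{p. 0 \<le> fst p \<and> fst p \<le> snd p \<and> snd p \<le> 1 \<and> (fst p = 0 \<or> snd p = 1)}"
  have "E \<le> C" using C E_le_min_const by simp
  have "(\<lambda>p. \<bar>f (fst p) - f (snd p)\<bar>) (x, y) \<le> (\<lambda>p. modulus C (snd p - fst p)) (x, y)"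
  proof (rule contracting_error_vanishes[of D B ?T, OF D_nonneg D_lt_1 B_nonneg])
    fix p :: "real \<times> real" assume "p \<in> ?T"
    then show "\<bar>f (fst p) - f (snd p)\<bar> \<le> modulus C (snd p - fst p) + B"
      using osc_le_modulus_plus_B[OF \<open>E \<le> C\<close>] by simp
  next
    fix e :: real and p :: "real \<times> real"
    assume e: "0 \<le> e" and p: "p \<in> ?T"
      and hyp: "\<And>q. q \<in> ?T \<Longrightarrow> \<bar>f (fst q) - f (snd q)\<bar> \<le> modulus C (snd q - fst q) + e"
    have "\<bar>f u - f v\<bar> \<le> modulus C (v - u) + e"
      if "0 \<le> u" "u \<le> v" "v \<le> 1" "u = 0 \<or> v = 1" for u v
      using hyp[of "(u, v)"] that by simp
    from modulus_estimate_endpoint_step[OF C e this] p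
    show "\<bar>f (fst p) - f (snd p)\<bar> \<le> modulus C (snd p - fst p) + D * e" by simp
  qed (use xy in simp)
  then show ?thesis by simp
qed

lemma modulus_le_of_le: "0 \<le> C \<Longrightarrow> 0 \<le> h \<Longrightarrow> h \<le> l \<Longrightarrow> modulus C h \<le> C * l powr \<alpha>"
  using modulus_le[of h C] powr_mono2[of \<alpha> h l] alpha_pos mult_left_mono by fastforce

lemma modulus_estimate_across:
  assumes C: "min_const \<le> C" and k: "1 \<le> k" "k < n"
    and xy: "ss_alpha a k \<le> x" "x \<le> ss_alpha a (Suc k)"
      "ss_alpha a (Suc k) \<le> y" "y \<le> ss_alpha a (Suc (Suc k))"
  shows "\<bar>f x - f y\<bar> \<le> 2 * C * (y - x) powr \<alpha>"
proof -
  let ?p = "ss_alpha a (Suc k)"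
  have k': "1 \<le> Suc k" "Suc k \<le> n" using k by auto
  have C0: "0 \<le> C" using C E_le_min_const E_nonneg by simp
  have ak: "0 < a k" "0 < a (Suc k)" using a_pos k k' by auto
  have p_eq: "ss_S_inv a k ?p = 1" "ss_S_inv a (Suc k) ?p = 0"
    using ak k by (simp_all add: ss_S_inv_def ss_alpha_Suc)
  have u: "ss_S_inv a k x \<in> {0..1}" and v: "ss_S_inv a (Suc k) y \<in> {0..1}"
    using ss_S_inv_mem_unit[of k x] ss_S_inv_mem_unit[OF k', of y] k xy by auto
  have "\<bar>f x - f ?p\<bar> \<le> modulus C (?p - x) + D * 0"
    using modulus_estimate_endpoint[OF C, of "ss_S_inv a k x" 1] u k xy
      E_plus_abs_c_le_min_const[of k] C p_eq
    by (intro modulus_scale_piece) auto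
  moreover have "\<bar>f ?p - f y\<bar> \<le> modulus C (y - ?p) + D * 0"
    using modulus_estimate_endpoint[OF C, of 0 "ss_S_inv a (Suc k) y"] v k' xy
      E_plus_abs_c_le_min_const[of "Suc k"] C p_eq
    by (intro modulus_scale_piece) auto
  moreover have "modulus C (?p - x) \<le> C * (y - x) powr \<alpha>" "modulus C (y - ?p) \<le> C * (y - x) powr \<alpha>"
    using xy C0 ss_alpha_mono[of k "Suc k"] by (intro modulus_le_of_le; simp)+
  ultimately show ?thesis by linarith
qed

lemma modulus_estimate_step:
  assumes C: "min_const \<le> C" and e: "0 \<le> e"
    and hyp: "\<And>u v. 0 \<le> u \<Longrightarrow> u \<le> v \<Longrightarrow> v \<le> 1 \<Longrightarrow>
      \<bar>f u - f v\<bar> \<le> modulus (2 * C + E) (v - u) + e"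
    and xy: "0 \<le> x" "x \<le> y" "y \<le> 1"
  shows "\<bar>f x - f y\<bar> \<le> modulus (2 * C + E) (y - x) + D * e"
proof -
  let ?C = "2 * C + E"
  have "0 \<le> C" using C E_le_min_const E_nonneg by simp
  then have C': "min_const \<le> ?C" "E \<le> ?C" using C E_nonneg by simp_all
  obtain k where k: "1 \<le> k" "k \<le> n" "x \<in> {ss_alpha a k .. ss_alpha a (Suc k)}"
    using ex_piece[of x] xy by auto
  consider "y \<le> ss_alpha a (Suc k)" | "m \<le> y - x" | "ss_alpha a (Suc k) < y" "y - x < m"
    by linarith
  then show ?thesis
  proof cases
    case 1
    have "0 \<le> ss_S_inv a k x" "ss_S_inv a k x \<le> ss_S_inv a k y" "ss_S_inv a k y \<le> 1"
      using ss_S_inv_mem_unit[OF k(1,2), of x] ss_S_inv_mem_unit[OF k(1,2), of y] k 1 xy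
        a_pos[OF k(1,2)] by (auto simp: ss_S_inv_def divide_right_mono)
    then show ?thesis
      using k 1 xy e E_plus_abs_c_le_min_const[OF k(1,2)] C' hyp
      by (intro modulus_scale_piece[where k = k]) auto
  next
    case 2
    then show ?thesis
      using osc_le_modulus_far[OF C'(1) xy(1) 2 xy(3)] mult_nonneg_nonneg[OF D_nonneg e]
      by linarith
  next
    case 3
    have "k < n" using 3 xy k ss_alpha_last by (cases "k = n") auto
    moreover have "y \<le> ss_alpha a (Suc (Suc k))"
    proof -
      have "m \<le> a (Suc k)" using m_le_a \<open>k < n\<close> by simp
      then show ?thesis using 3 k ss_alpha_Suc[of "Suc k" a] by simp
    qed
    ultimately have "\<bar>f x - f y\<bar> \<le> 2 * C * (y - x) powr \<alpha>"
      using 3 k C by (intro modulus_estimate_across) auto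
    also have "\<dots> \<le> modulus ?C (y - x)"
      using modulus_ge[OF C'(2), of "y - x"] xy by simp
    finally show ?thesis using mult_nonneg_nonneg[OF D_nonneg e] by linarith
  qed
qed

lemma modulus_estimate:
  assumes C: "min_const \<le> C" and xy: "0 \<le> x" "x \<le> y" "y \<le> 1"
  shows "\<bar>f x - f y\<bar> \<le> modulus (2 * C + E) (y - x)"
proof -
  let ?T = "{p. 0 \<le> fst p \<and> fst p \<le> snd p \<and> snd p \<le> 1}"
  have "E \<le> 2 * C + E" using C E_le_min_const E_nonneg by simp
  have "(\<lambda>p. \<bar>f (fst p) - f (snd p)\<bar>) (x, y) \<le> (\<lambda>p. modulus (2 * C + E) (snd p - fst p)) (x, y)"
  proof (rule contracting_error_vanishes[of D B ?T, OF D_nonneg D_lt_1 B_nonneg])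
    fix p :: "real \<times> real" assume "p \<in> ?T"
    then show "\<bar>f (fst p) - f (snd p)\<bar> \<le> modulus (2 * C + E) (snd p - fst p) + B"
      using osc_le_modulus_plus_B[OF \<open>E \<le> 2 * C + E\<close>] by simp
  next
    fix e :: real and p :: "real \<times> real"
    assume e: "0 \<le> e" and p: "p \<in> ?T"
      and hyp: "\<And>q. q \<in> ?T \<Longrightarrow>
        \<bar>f (fst q) - f (snd q)\<bar> \<le> modulus (2 * C + E) (snd q - fst q) + e"
    have "\<bar>f u - f v\<bar> \<le> modulus (2 * C + E) (v - u) + e" if "0 \<le> u" "u \<le> v" "v \<le> 1" for u v
      using hyp[of "(u, v)"] that by simp
    from modulus_estimate_step[OF C e this] p
    show "\<bar>f (fst p) - f (snd p)\<bar> \<le> modulus (2 * C + E) (snd p - fst p) + D * e" by simp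
  qed (use xy in simp)
  then show ?thesis by simp
qed

lemma holder_estimate:
  "\<exists>C\<ge>0. \<forall>x\<in>{0..1}. \<forall>y\<in>{0..1}. \<bar>f x - f y\<bar> \<le> C * \<bar>x - y\<bar> powr \<alpha>"
proof -
  define C where "C = 2 * min_const + E"
  have C0: "0 \<le> C" using E_nonneg E_le_min_const by (simp add: C_def)
  have le: "\<bar>f x - f y\<bar> \<le> C * \<bar>x - y\<bar> powr \<alpha>" if "0 \<le> x" "x \<le> y" "y \<le> 1" for x y
    using modulus_estimate[of min_const x y] modulus_le[of "y - x" C] that by (simp add: C_def)
  have "\<bar>f x - f y\<bar> \<le> C * \<bar>x - y\<bar> powr \<alpha>" if "x \<in> {0..1}" "y \<in> {0..1}" for x y
    using le[of x y] le[of y x] that abs_minus_commute[of x y] abs_minus_commute[of "f x" "f y"]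
    by (cases "x \<le> y") auto
  with C0 show ?thesis by blast
qed

end

theorem theorem2:
  fixes n :: nat and a c d \<beta> :: "nat \<Rightarrow> real" and f :: "real \<Rightarrow> real" and \<alpha> :: real
  assumes n2: "n \<ge> 2"
    and apos: "\<forall>k\<in>{1..n}. a k > 0"
    and asum: "(\<Sum>k=1..n. a k) = 1"
    and dlt: "\<forall>k\<in>{1..n}. \<bar>d k\<bar> < 1"
    and fcont: "continuous_on {0..1} f"
    and ffix: "\<forall>t\<in>{0..1}. f t = ss_G n a c d \<beta> f t"
    and ex_i: "\<exists>i\<in>{1..n}. \<bar>d i\<bar> > a i"
    and alpha_pos: "0 < \<alpha>" and alpha_le1: "\<alpha> \<le> 1"
    and alpha_le: "\<forall>j\<in>{1..n}. d j \<noteq> 0 \<longrightarrow> \<alpha> \<le> ln \<bar>d j\<bar> / ln (a j)"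
  shows "\<exists>C\<ge>0. \<forall>x\<in>{0..1}. \<forall>y\<in>{0..1}. \<bar>f x - f y\<bar> \<le> C * \<bar>x - y\<bar> powr \<alpha>"
proof -
  interpret ss_partition n a using n2 apos asum by unfold_locales auto
  have d_le: "\<forall>k\<in>{1..n}. \<bar>d k\<bar> \<le> a k powr \<alpha>"
    using alpha_le abs_le_a_powr by simp
  have "\<alpha> \<noteq> 1"
  proof
    assume "\<alpha> = 1"
    with ex_i d_le apos show False by fastforce
  qed
  obtain B where "\<forall>x\<in>{0..1}. \<forall>y\<in>{0..1}. \<bar>f x - f y\<bar> \<le> B"
    using continuous_on_compact_ex_oscillation_bound[OF fcont] by auto
  moreover obtain D where "D < 1" "\<forall>k\<in>{1..n}. \<bar>d k\<bar> \<le> D"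
    using finite_ex_uniform_bound_less[of "{1..n}" "\<lambda>k. \<bar>d k\<bar>" 1] dlt by auto
  moreover obtain m where "0 < m" "\<forall>k\<in>{1..n}. m \<le> a k"
    using finite_ex_uniform_bound_greater[of "{1..n}" 0 a] apos by auto
  ultimately interpret ss_holder n a c d \<beta> f \<alpha> B D m
    using fcont ffix alpha_pos alpha_le1 \<open>\<alpha> \<noteq> 1\<close> d_le by unfold_locales auto
  show ?thesis by (rule holder_estimate)
qed

end
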